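(* Consider the multiobjective proximal gradient (MPG) algorithm described in the context, applied to the problem $\min_{x\in\mathbb{R}^n} F(x)$ under the standing assumptions (i)–(iii). Then the MPG algorithm is well defined (that is, at any iteration $k$ at which it does not stop, the line search of Step 3 terminates after finitely many trial step sizes, so $x^{k+1}$ is defined), and it stops at iteration $k$ if and only if $x^k$ is a weakly Pareto optimal point of the problem.
   Context: Let $F:\mathbb{R}^n\to(\mathbb{R}\cup\{+\infty\})^m$, $F=(F_1,\ldots,F_m)$, with $F_j=G_j+H_j$ for $j=1,\ldots,m$, where: (i) each $G_j:\mathbb{R}^n\to\mathbb{R}$ is continuously differentiable and convex; (ii) each $H_j:\mathbb{R}^n\to\mathbb{R}\cup\{+\infty\}$ is proper, convex and continuous on its domain $\mathrm{dom}(H_j)$; (iii) $\mathrm{dom}(F):=\{x: F_j(x)<+\infty\ \forall j\}$ is nonempty and closed. For $u,v\in\mathbb{R}^m$, $u\preceq v$ means $u_j\le v_j$ for all $j$, and $u\prec v$ means $u_j<v_j$ for all $j$. A point $\bar x$ is weakly Pareto optimal if there is no $x\in\mathbb{R}^n$ with $F(x)\prec F(\bar x)$. For $x\in\mathrm{dom}(F)$ and $\alpha>0$ define $\psi_x(u):=\max_{j=1,\ldots,m}\big(\nabla G_j(x)^\top(u-x)+H_j(u)-H_j(x)\big)$, $p_\alpha(x):=\arg\min_{u\in\mathbb{R}^n}\psi_x(u)+\frac{1}{2\alpha}\|u-x\|^2$ (unique minimizer), and $\theta_\alpha(x):=\psi_x(p_\alpha(x))+\frac{1}{2\alpha}\|p_\alpha(x)-x\|^2$.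 MPG algorithm. Step 0: choose $x^0\in\mathrm{dom}(F)$, $\alpha>0$, $\gamma\in(0,2/\alpha)$, $0<\tau_1<\tau_2<1$; set $k=0$. Step 1: compute $p^k:=p_\alpha(x^k)$ and $\theta_\alpha(x^k)$. Step 2: if $\theta_\alpha(x^k)=0$, stop. Step 3: set $d^k:=p^k-x^k$, take $j_k^*\in\arg\max_{j}\nabla G_j(x^k)^\top d^k$, set $t=1$. Step 3.1: if $G_{j_k^*}(x^k+td^k)\le G_{j_k^*}(x^k)+t\nabla G_{j_k^*}(x^k)^\top d^k+t\frac{\gamma}{2}\|d^k\|^2$, go to Step 3.2; otherwise replace $t$ by some value in $[\tau_1 t,\tau_2 t]$ and repeat Step 3.1. Step 3.2: if $F(x^k+td^k)\preceq F(x^k)$, set $t_k=t$ and go to Step 4. Step 3.3: replace $t$ by some value in $[\tau_1 t,\tau_2 t]$; if $G_j(x^k+td^k)\le G_j(x^k)+t\nabla G_j(x^k)^\top d^k+t\frac{\gamma}{2}\|d^k\|^2$ for all $j=1,\ldots,m$, set $t_k=t$ and go to Step 4; otherwise repeat Step 3.3. Step 4: $x^{k+1}:=x^k+t_kd^k$, $k\leftarrow k+1$, go to Step 1. *)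

theory Defs
  imports "HOL-Analysis.Analysis"
begin

text \<open>Objectives are indexed by j in {..<m}. Each extended-valued H_j is represented
  by a real function H j together with its effective domain domH j; outside domH j
  the value of H_j is +infinity.\<close>

definition domF :: "nat \<Rightarrow> (nat \<Rightarrow> 'a set) \<Rightarrow> 'a set" where
  "domF m domH = (\<Inter>j\<in>{..<m}. domH j)"

definition Fext :: "(nat \<Rightarrow> 'a \<Rightarrow> real) \<Rightarrow> (nat \<Rightarrow> 'a \<Rightarrow> real) \<Rightarrow> (nat \<Rightarrow> 'a set)
    \<Rightarrow> nat \<Rightarrow> 'a \<Rightarrow> ereal" where
  "Fext G H domH j x = (if x \<in> domH j then ereal (G j x + H j x) else \<infinity>)"

definition weakly_pareto :: "nat \<Rightarrow> (nat \<Rightarrow> 'a \<Rightarrow> real) \<Rightarrow> (nat \<Rightarrow> 'a \<Rightarrow> real)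
    \<Rightarrow> (nat \<Rightarrow> 'a set) \<Rightarrow> 'a \<Rightarrow> bool" where
  "weakly_pareto m G H domH xb \<longleftrightarrow>
     \<not> (\<exists>x. \<forall>j<m. Fext G H domH j x < Fext G H domH j xb)"

text \<open>psi_x(u) = max_j (grad G_j(x)^T (u - x) + H_j(u) - H_j(x)), +infinity if u is outside
  some dom H_j (x is always taken in dom F).\<close>
definition psi :: "nat \<Rightarrow> (nat \<Rightarrow> 'a \<Rightarrow> 'a::real_inner) \<Rightarrow> (nat \<Rightarrow> 'a \<Rightarrow> real)
    \<Rightarrow> (nat \<Rightarrow> 'a set) \<Rightarrow> 'a \<Rightarrow> 'a \<Rightarrow> ereal" where
  "psi m gradG H domH x u =
     Max ((\<lambda>j. if u \<in> domH j then ereal (gradG j x \<bullet> (u - x) + H j u - H j x) else \<infinity>) ` {..<m})"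

definition prox_obj :: "nat \<Rightarrow> (nat \<Rightarrow> 'a \<Rightarrow> 'a::real_inner) \<Rightarrow> (nat \<Rightarrow> 'a \<Rightarrow> real)
    \<Rightarrow> (nat \<Rightarrow> 'a set) \<Rightarrow> real \<Rightarrow> 'a \<Rightarrow> 'a \<Rightarrow> ereal" where
  "prox_obj m gradG H domH \<alpha> x u = psi m gradG H domH x u + ereal ((norm (u - x))\<^sup>2 / (2 * \<alpha>))"

definition prox_pt :: "nat \<Rightarrow> (nat \<Rightarrow> 'a \<Rightarrow> 'a::real_inner) \<Rightarrow> (nat \<Rightarrow> 'a \<Rightarrow> real)
    \<Rightarrow> (nat \<Rightarrow> 'a set) \<Rightarrow> real \<Rightarrow> 'a \<Rightarrow> 'a" where
  "prox_pt m gradG H domH \<alpha> x =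
     (THE u. \<forall>v. prox_obj m gradG H domH \<alpha> x u \<le> prox_obj m gradG H domH \<alpha> x v)"

definition theta :: "nat \<Rightarrow> (nat \<Rightarrow> 'a \<Rightarrow> 'a::real_inner) \<Rightarrow> (nat \<Rightarrow> 'a \<Rightarrow> real)
    \<Rightarrow> (nat \<Rightarrow> 'a set) \<Rightarrow> real \<Rightarrow> 'a \<Rightarrow> ereal" where
  "theta m gradG H domH \<alpha> x = prox_obj m gradG H domH \<alpha> x (prox_pt m gradG H domH \<alpha> x)"

text \<open>Descent-type test used in Steps 3.1 and 3.3 for objective j.\<close>
definition armijo :: "(nat \<Rightarrow> 'a \<Rightarrow> real) \<Rightarrow> (nat \<Rightarrow> 'a \<Rightarrow> 'a::real_inner) \<Rightarrow> real
    \<Rightarrow> nat \<Rightarrow> 'a \<Rightarrow> 'a \<Rightarrow> real \<Rightarrow> bool" where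
  "armijo G gradG \<gamma> j x d t \<longleftrightarrow>
     G j (x + t *\<^sub>R d) \<le> G j x + t * (gradG j x \<bullet> d) + t * (\<gamma> / 2) * (norm d)\<^sup>2"

definition backtrack_seq :: "real \<Rightarrow> real \<Rightarrow> real \<Rightarrow> (nat \<Rightarrow> real) \<Rightarrow> bool" where
  "backtrack_seq \<tau>1 \<tau>2 t0 ts \<longleftrightarrow>
     ts 0 = t0 \<and> (\<forall>i. \<tau>1 * ts i \<le> ts (Suc i) \<and> ts (Suc i) \<le> \<tau>2 * ts i)"

end

theory Submission
  imports Defs
begin

text \<open>On dom F the subproblem objective is psi_x(u) + |u - x|^2/(2 alpha) with psi_x finite,
  convex, continuous and psi_x(x) = 0. A convex function grows at least linearly away from x,
  so the quadratic term makes the objective coercive; it also makes it strongly convex. Hence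
  p_alpha(x) exists and is unique, and theta_alpha(x) <= 0.
  If F(y) < F(x) componentwise, the gradient inequality gives psi_x(y) < 0; by convexity
  psi_x(x + t(y - x)) <= t psi_x(y), which beats the quadratic term t^2 |y - x|^2/(2 alpha) for
  small t, so theta_alpha(x) < 0. Conversely, if theta_alpha(x) < 0 then psi_x(p) < 0 for
  p = p_alpha(x); along d = p - x each G_j decreases to first order by grad G_j(x)^T d and each
  H_j by convexity, so all F_j drop strictly for a small step and x is not weakly Pareto optimal.
  Finally theta_alpha(x) <> 0 forces d <> 0, so every Armijo-type test holds for all small
  t > 0; the backtracked step sizes tend to 0, hence the line search stops, at a point of the
  segment [x, p], which lies in the convex set dom F.\<close>

lemma has_real_derivative_along_line:
  fixes g :: "'a::real_inner \<Rightarrow> real"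
  assumes "(g has_derivative (\<lambda>h. gr \<bullet> h)) (at x)"
  shows "((\<lambda>t. g (x + t *\<^sub>R d)) has_real_derivative gr \<bullet> d) (at 0)"
proof -
  have "((\<lambda>t. x + t *\<^sub>R d) has_derivative (\<lambda>t. t *\<^sub>R d)) (at 0)"
    by (auto intro!: derivative_eq_intros)
  moreover have "(g has_derivative (\<lambda>h. gr \<bullet> h)) (at (x + 0 *\<^sub>R d))"
    using assms by simp
  ultimately have "((\<lambda>t. g (x + t *\<^sub>R d)) has_derivative (\<lambda>t. gr \<bullet> (t *\<^sub>R d))) (at 0)"
    by (rule has_derivative_compose)
  thus ?thesis
    by (simp add: has_field_derivative_def mult.commute[of _ "gr \<bullet> d"])
qed

lemma eventually_le_tangent_plus:
  fixes g :: "'a::real_inner \<Rightarrow> real"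
  assumes "(g has_derivative (\<lambda>h. gr \<bullet> h)) (at x)" "0 < e"
  shows "eventually (\<lambda>t. g (x + t *\<^sub>R d) \<le> g x + t * (gr \<bullet> d) + t * e) (at_right 0)"
proof -
  have "((\<lambda>t. (g (x + t *\<^sub>R d) - g x) / t) \<longlongrightarrow> gr \<bullet> d) (at_right 0)"
    using has_real_derivative_along_line[OF assms(1), of d]
    by (auto simp: has_field_derivative_iff intro: tendsto_mono[OF at_le])
  hence "eventually (\<lambda>t. (g (x + t *\<^sub>R d) - g x) / t < gr \<bullet> d + e) (at_right 0)"
    using assms(2) by (intro order_tendstoD) auto
  moreover have "eventually (\<lambda>t::real. 0 < t) (at_right 0)"
    by (simp add: eventually_at_right_less)
  ultimately show ?thesis
    by eventually_elim (simp add: field_simps)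
qed

lemma convex_on_imp_above_tangent_inner:
  fixes g :: "'a::real_inner \<Rightarrow> real"
  assumes "(g has_derivative (\<lambda>h. gr \<bullet> h)) (at x)" "convex_on UNIV g"
  shows "gr \<bullet> (y - x) \<le> g y - g x"
proof -
  define h where "h t = g (x + t *\<^sub>R (y - x))" for t
  have "convex_on UNIV h"
  proof (rule convex_onI)
    fix s a b :: real assume "0 < s" "s < 1"
    moreover have "x + ((1 - s) * a + s * b) *\<^sub>R (y - x)
        = (1 - s) *\<^sub>R (x + a *\<^sub>R (y - x)) + s *\<^sub>R (x + b *\<^sub>R (y - x))"
      by (simp add: algebra_simps)
    ultimately show "h ((1 - s) *\<^sub>R a + s *\<^sub>R b) \<le> (1 - s) * h a + s * h b"
      unfolding h_def using convex_onD[OF assms(2)] by simp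
  qed simp
  moreover have "(h has_real_derivative gr \<bullet> (y - x)) (at 0)"
    unfolding h_def by (rule has_real_derivative_along_line[OF assms(1)])
  ultimately have "gr \<bullet> (y - x) * (1 - 0) \<le> h 1 - h 0"
    by (intro convex_on_imp_above_tangent[of UNIV]) auto
  thus ?thesis by (simp add: h_def)
qed

lemma backtrack_seq_bounds:
  assumes "backtrack_seq \<tau>1 \<tau>2 t0 ts" "0 < \<tau>1" "\<tau>1 < \<tau>2" "\<tau>2 < 1" "0 < t0"
  shows "0 < ts i \<and> ts i \<le> t0 \<and> ts i \<le> \<tau>2 ^ i * t0"
proof (induction i)
  case 0
  thus ?case using assms(1,5) by (simp add: backtrack_seq_def)
next
  case (Suc i)
  have step: "\<tau>1 * ts i \<le> ts (Suc i)" "ts (Suc i) \<le> \<tau>2 * ts i"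
    using assms(1) by (auto simp: backtrack_seq_def)
  have "0 < \<tau>1 * ts i" using Suc.IH assms(2) by simp
  moreover have "\<tau>2 * ts i \<le> ts i" using Suc.IH assms(2-4) by (intro mult_left_le_one_le) auto
  moreover have "\<tau>2 * ts i \<le> \<tau>2 ^ Suc i * t0" using Suc.IH assms(2,3) by (simp add: mult.assoc)
  ultimately show ?case using step Suc.IH by linarith
qed

lemma backtrack_seq_filterlim_at_right:
  assumes "backtrack_seq \<tau>1 \<tau>2 t0 ts" "0 < \<tau>1" "\<tau>1 < \<tau>2" "\<tau>2 < 1" "0 < t0"
  shows "filterlim ts (at_right 0) sequentially"
proof -
  have bounds: "0 < ts i" "ts i \<le> \<tau>2 ^ i * t0" for i
    using backtrack_seq_bounds[OF assms] by auto
  have "(\<lambda>i. \<tau>2 ^ i * t0) \<longlonglongrightarrow> 0"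
    using assms(2-4) by (intro tendsto_mult_left_zero LIMSEQ_power_zero) auto
  hence "ts \<longlonglongrightarrow> 0"
    using bounds by (intro tendsto_sandwich[of "\<lambda>_. 0" ts _ "\<lambda>i. \<tau>2 ^ i * t0"])
      (auto intro: less_imp_le always_eventually)
  thus ?thesis
    using bounds by (intro tendsto_imp_filterlim_at_right) auto
qed

lemma backtrack_seq_terminates:
  assumes "backtrack_seq \<tau>1 \<tau>2 t0 ts" "0 < \<tau>1" "\<tau>1 < \<tau>2" "\<tau>2 < 1" "0 < t0"
    and "eventually P (at_right 0)"
  shows "\<exists>i>0. P (ts i)"
proof -
  have "eventually (\<lambda>i. P (ts i)) sequentially"
    using backtrack_seq_filterlim_at_right[OF assms(1-5)] assms(6) by (simp add: filterlim_iff)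
  then obtain N where "\<And>i. N \<le> i \<Longrightarrow> P (ts i)" by (auto simp: eventually_sequentially)
  thus ?thesis by (intro exI[of _ "Suc N"]) auto
qed

lemma continuous_on_Max:
  fixes f :: "'i \<Rightarrow> 'a::topological_space \<Rightarrow> 'b::linorder_topology"
  assumes "finite A" "A \<noteq> {}" "\<And>j. j \<in> A \<Longrightarrow> continuous_on S (f j)"
  shows "continuous_on S (\<lambda>x. Max ((\<lambda>j. f j x) ` A))"
  using assms
proof (induction A rule: finite_ne_induct)
  case (insert a A)
  thus ?case by (simp add: continuous_on_max)
qed simp

lemma convex_on_Max:
  fixes f :: "'i \<Rightarrow> 'a::real_vector \<Rightarrow> real"
  assumes "finite A" "A \<noteq> {}" "convex S" "\<And>j. j \<in> A \<Longrightarrow> convex_on S (f j)"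
  shows "convex_on S (\<lambda>x. Max ((\<lambda>j. f j x) ` A))"
proof (rule convex_onI[OF _ assms(3)])
  fix t :: real and x y assume t: "0 < t" "t < 1" and xy: "x \<in> S" "y \<in> S"
  have "f j ((1 - t) *\<^sub>R x + t *\<^sub>R y) \<le> (1 - t) * Max ((\<lambda>j. f j x) ` A) + t * Max ((\<lambda>j. f j y) ` A)"
    if j: "j \<in> A" for j
  proof -
    have "f j ((1 - t) *\<^sub>R x + t *\<^sub>R y) \<le> (1 - t) * f j x + t * f j y"
      using convex_onD[OF assms(4)[OF j]] t xy by simp
    also have "\<dots> \<le> (1 - t) * Max ((\<lambda>j. f j x) ` A) + t * Max ((\<lambda>j. f j y) ` A)"
      using t j assms(1) by (intro add_mono mult_left_mono Max_ge) auto
    finally show ?thesis .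
  qed
  thus "Max ((\<lambda>j. f j ((1 - t) *\<^sub>R x + t *\<^sub>R y)) ` A)
      \<le> (1 - t) * Max ((\<lambda>j. f j x) ` A) + t * Max ((\<lambda>j. f j y) ` A)"
    using assms(1,2) by (simp add: Max_le_iff)
qed

lemma small_step_linear_dominates_quadratic:
  fixes M c :: real
  assumes "M < 0" "0 \<le> c"
  shows "\<exists>t. 0 < t \<and> t \<le> 1 \<and> t * M + t\<^sup>2 * c < 0"
proof -
  define t where "t = min 1 (- M / (c + 1))"
  have t: "0 < t" "t \<le> 1" "t \<le> - M / (c + 1)"
    using assms by (auto simp: t_def divide_neg_pos)
  have "t * c \<le> - M / (c + 1) * c" using t(3) assms(2) by (rule mult_right_mono)
  also have "\<dots> < - M" using assms by (simp add: field_simps)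
  finally have "t * (M + t * c) < 0" using t(1) by (simp add: mult_pos_neg)
  thus ?thesis using t by (intro exI[of _ t]) (simp add: algebra_simps power2_eq_square)
qed

lemma convex_on_growth_outside_ball:
  fixes g :: "'a::real_normed_vector \<Rightarrow> real"
  assumes g: "convex_on S g" and x: "x \<in> S" and u: "u \<in> S" and R: "1 \<le> norm (u - x)"
    and c: "\<And>w. w \<in> S \<Longrightarrow> norm (w - x) \<le> 1 \<Longrightarrow> c \<le> g w - g x"
  shows "norm (u - x) * c \<le> g u - g x"
proof -
  define s where "s = 1 / norm (u - x)"
  have R0: "0 < norm (u - x)" using R by linarith
  hence s: "0 < s" "s \<le> 1" using R by (simp_all add: s_def)
  define w where "w = (1 - s) *\<^sub>R x + s *\<^sub>R u"
  have "w \<in> S"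
    unfolding w_def using convexD_alt[OF convex_on_imp_convex[OF g] x u] s by simp
  moreover have "norm (w - x) = 1"
  proof -
    have "w - x = s *\<^sub>R (u - x)" by (simp add: w_def algebra_simps)
    thus ?thesis using R s by (simp add: s_def)
  qed
  ultimately have "c \<le> g w - g x" by (intro c) auto
  also have "\<dots> \<le> s * (g u - g x)"
    using convex_onD[OF g, of s x u] s x u by (simp add: w_def algebra_simps)
  finally show ?thesis using R0 by (simp add: s_def le_divide_eq mult.commute)
qed

lemma convex_on_linear_minorant_outside_ball:
  fixes g :: "'a::euclidean_space \<Rightarrow> real"
  assumes S: "closed S" and g: "convex_on S g" "continuous_on S g" and x: "x \<in> S"
  obtains c where "\<And>u. u \<in> S \<Longrightarrow> 1 \<le> norm (u - x) \<Longrightarrow> norm (u - x) * c \<le> g u - g x"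
proof -
  have "compact (S \<inter> cball x 1)" using S by (simp add: closed_Int_compact)
  moreover have "x \<in> S \<inter> cball x 1" using x by simp
  moreover have "continuous_on (S \<inter> cball x 1) g" using g(2) by (rule continuous_on_subset) auto
  ultimately obtain w where w: "\<And>v. v \<in> S \<inter> cball x 1 \<Longrightarrow> g w \<le> g v"
    using continuous_attains_inf by (metis empty_iff)
  have "g w - g x \<le> g v - g x" if "v \<in> S" "norm (v - x) \<le> 1" for v
    using w[of v] that by (simp add: dist_norm norm_minus_commute)
  thus ?thesis
    using convex_on_growth_outside_ball[OF g(1) x] that[of "g w - g x"] by blast
qed

lemma prox_objective_attains_min:
  fixes g :: "'a::euclidean_space \<Rightarrow> real"
  assumes S: "closed S" and g: "convex_on S g" "continuous_on S g" and x: "x \<in> S"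
    and \<alpha>: "0 < \<alpha>"
  shows "\<exists>p\<in>S. \<forall>v\<in>S. g p + (norm (p - x))\<^sup>2 / (2 * \<alpha>) \<le> g v + (norm (v - x))\<^sup>2 / (2 * \<alpha>)"
proof -
  define f where "f v = g v + (norm (v - x))\<^sup>2 / (2 * \<alpha>)" for v
  obtain c where c: "\<And>u. u \<in> S \<Longrightarrow> 1 \<le> norm (u - x) \<Longrightarrow> norm (u - x) * c \<le> g u - g x"
    using convex_on_linear_minorant_outside_ball[OF S g x] by blast
  define \<rho> where "\<rho> = max 1 (- 2 * \<alpha> * c)"
  have far: "f x < f v" if v: "v \<in> S" "\<rho> < norm (v - x)" for v
  proof -
    define R where "R = norm (v - x)"
    have R: "1 \<le> R" "- 2 * \<alpha> * c < R" using v(2) by (auto simp: R_def \<rho>_def)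
    have "R * c \<le> g v - g x" unfolding R_def using c v R by (simp add: R_def)
    moreover have "0 < R * (c + R / (2 * \<alpha>))"
      using R \<alpha> by (intro mult_pos_pos) (auto simp: field_simps)
    ultimately show ?thesis
      by (simp add: f_def R_def[symmetric] field_simps power2_eq_square)
  qed
  define K where "K = S \<inter> cball x \<rho>"
  have "compact K" unfolding K_def using S by (simp add: closed_Int_compact)
  moreover have "x \<in> K" using x by (simp add: K_def \<rho>_def)
  moreover have "continuous_on K f"
    unfolding f_def K_def using continuous_on_subset[OF g(2)] \<alpha> by (intro continuous_intros) auto
  ultimately obtain p where p: "p \<in> K" "\<And>v. v \<in> K \<Longrightarrow> f p \<le> f v"
    using continuous_attains_inf by (metis empty_iff)
  have "f p \<le> f v" if v: "v \<in> S" for v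
  proof (cases "norm (v - x) \<le> \<rho>")
    case True
    thus ?thesis using p(2) v by (simp add: K_def dist_norm norm_minus_commute)
  next
    case False
    thus ?thesis using p(2)[OF \<open>x \<in> K\<close>] far[OF v] by simp
  qed
  thus ?thesis using p(1) unfolding f_def K_def by blast
qed

lemma norm_midpoint_diff_sq:
  fixes u v x :: "'a::real_inner"
  shows "(norm ((1/2) *\<^sub>R u + (1/2) *\<^sub>R v - x))\<^sup>2
    = ((norm (u - x))\<^sup>2 + (norm (v - x))\<^sup>2) / 2 - (norm (u - v))\<^sup>2 / 4"
  by (simp add: power2_norm_eq_inner inner_simps inner_commute algebra_simps) (simp add: field_simps)

lemma prox_objective_min_unique:
  fixes g :: "'a::real_inner \<Rightarrow> real"
  assumes g: "convex_on S g" and \<alpha>: "0 < \<alpha>" and pq: "p \<in> S" "q \<in> S"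
    and min: "\<And>v. v \<in> S \<Longrightarrow> g p + (norm (p - x))\<^sup>2 / (2 * \<alpha>) \<le> g v + (norm (v - x))\<^sup>2 / (2 * \<alpha>)"
             "\<And>v. v \<in> S \<Longrightarrow> g q + (norm (q - x))\<^sup>2 / (2 * \<alpha>) \<le> g v + (norm (v - x))\<^sup>2 / (2 * \<alpha>)"
  shows "p = q"
proof (rule ccontr)
  assume "p \<noteq> q"
  define Q where "Q v = (norm (v - x))\<^sup>2 / (2 * \<alpha>)" for v
  define \<delta> where "\<delta> = (norm (p - q))\<^sup>2 / (8 * \<alpha>)"
  define z where "z = (1/2) *\<^sub>R p + (1/2) *\<^sub>R q"
  have z: "z \<in> S"
    unfolding z_def using convexD[OF convex_on_imp_convex[OF g] pq, of "1/2" "1/2"] by simp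
  have "g z \<le> (g p + g q) / 2"
    using convex_onD[OF g, of "1/2" p q] pq by (simp add: z_def)
  moreover have "Q z = (Q p + Q q) / 2 - \<delta>"
    using \<alpha> by (simp add: Q_def \<delta>_def z_def norm_midpoint_diff_sq field_simps)
  moreover have "g p + Q p = g q + Q q" using min pq unfolding Q_def by (meson order_antisym)
  moreover have "0 < \<delta>" using \<open>p \<noteq> q\<close> \<alpha> by (simp add: \<delta>_def)
  ultimately have "g z + Q z < g p + Q p" by (simp add: field_simps)
  thus False using min(1)[OF z] unfolding Q_def by simp
qed

locale mpg_problem =
  fixes m :: nat
    and G H :: "nat \<Rightarrow> 'a::euclidean_space \<Rightarrow> real"
    and gradG :: "nat \<Rightarrow> 'a \<Rightarrow> 'a"
    and domH :: "nat \<Rightarrow> 'a set"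
    and \<alpha> :: real
  assumes m_pos: "0 < m"
    and G_grad: "\<And>j x. j < m \<Longrightarrow> (G j has_derivative (\<lambda>h. gradG j x \<bullet> h)) (at x)"
    and G_convex: "\<And>j. j < m \<Longrightarrow> convex_on UNIV (G j)"
    and H_convex: "\<And>j. j < m \<Longrightarrow> convex_on (domH j) (H j)"
    and H_cont: "\<And>j. j < m \<Longrightarrow> continuous_on (domH j) (H j)"
    and domF_closed: "closed (domF m domH)"
    and alpha_pos: "0 < \<alpha>"
begin

abbreviation D :: "'a set" where "D \<equiv> domF m domH"

definition phi :: "'a \<Rightarrow> nat \<Rightarrow> 'a \<Rightarrow> real" where
  "phi x j u = gradG j x \<bullet> (u - x) + H j u - H j x"

definition psi_real :: "'a \<Rightarrow> 'a \<Rightarrow> real" where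
  "psi_real x u = Max ((\<lambda>j. phi x j u) ` {..<m})"

definition prox_real :: "'a \<Rightarrow> 'a \<Rightarrow> real" where
  "prox_real x u = psi_real x u + (norm (u - x))\<^sup>2 / (2 * \<alpha>)"

lemma mem_domF_iff: "u \<in> D \<longleftrightarrow> (\<forall>j<m. u \<in> domH j)"
  by (auto simp: domF_def)

lemma convex_domF: "convex D"
  unfolding domF_def using H_convex by (auto intro: convex_INT convex_on_imp_convex)

lemma segment_in_domF:
  assumes "x \<in> D" "y \<in> D" "0 \<le> t" "t \<le> 1"
  shows "x + t *\<^sub>R (y - x) \<in> D"
proof -
  have "x + t *\<^sub>R (y - x) = (1 - t) *\<^sub>R x + t *\<^sub>R y" by (simp add: algebra_simps)
  thus ?thesis using convexD_alt[OF convex_domF assms(1,2)] assms(3,4) by simp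
qed

lemma Fext_eq: "j < m \<Longrightarrow> x \<in> D \<Longrightarrow> Fext G H domH j x = ereal (G j x + H j x)"
  by (simp add: Fext_def mem_domF_iff)

lemma phi_le_psi_real: "j < m \<Longrightarrow> phi x j u \<le> psi_real x u"
  unfolding psi_real_def by (rule Max_ge) auto

lemma psi_real_le_iff: "psi_real x u \<le> c \<longleftrightarrow> (\<forall>j<m. phi x j u \<le> c)"
  unfolding psi_real_def using m_pos by (subst Max_le_iff) auto

lemma psi_real_self [simp]: "psi_real x x = 0"
  using phi_le_psi_real[OF m_pos, of x x] psi_real_le_iff[of x x 0] by (simp add: phi_def)

lemma prox_real_self [simp]: "prox_real x x = 0"
  by (simp add: prox_real_def)

lemma psi_eq_psi_real:
  assumes "u \<in> D"
  shows "psi m gradG H domH x u = ereal (psi_real x u)"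
proof -
  have "psi m gradG H domH x u = Max (ereal ` (\<lambda>j. phi x j u) ` {..<m})"
    unfolding psi_def image_image using assms
    by (intro arg_cong[where f = Max] image_cong) (auto simp: mem_domF_iff phi_def)
  also have "\<dots> = ereal (psi_real x u)"
    unfolding psi_real_def using m_pos by (intro mono_Max_commute[symmetric]) (auto simp: mono_def)
  finally show ?thesis .
qed

lemma psi_outside_domF:
  assumes "u \<notin> D"
  shows "psi m gradG H domH x u = \<infinity>"
proof -
  obtain j where "j < m" "u \<notin> domH j" using assms by (auto simp: mem_domF_iff)
  hence "\<infinity> \<le> psi m gradG H domH x u"
    unfolding psi_def by (intro Max_ge) (auto simp: image_iff intro!: bexI[of _ j])
  thus ?thesis by simp
qed

lemma prox_obj_eq_prox_real: "u \<in> D \<Longrightarrow> prox_obj m gradG H domH \<alpha> x u = ereal (prox_real x u)"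
  by (simp add: prox_obj_def prox_real_def psi_eq_psi_real)

lemma prox_obj_outside_domF: "u \<notin> D \<Longrightarrow> prox_obj m gradG H domH \<alpha> x u = \<infinity>"
  by (simp add: prox_obj_def psi_outside_domF)

lemma convex_on_psi_real: "convex_on D (psi_real x)"
proof -
  have "convex_on D (\<lambda>u. phi x j u)" if "j < m" for j
  proof -
    have "convex_on D (H j)"
      by (rule convex_on_subset[OF H_convex[OF that] _ convex_domF]) (use that in \<open>auto simp: mem_domF_iff\<close>)
    moreover have "convex_on D (\<lambda>u. gradG j x \<bullet> (u - x) - H j x)"
      by (rule convex_onI[OF _ convex_domF]) (simp add: inner_simps algebra_simps)
    ultimately show ?thesis
      unfolding phi_def using convex_on_add by (fastforce simp: algebra_simps)
  qed
  thus ?thesis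
    unfolding psi_real_def[abs_def] using m_pos convex_domF by (intro convex_on_Max) auto
qed

lemma continuous_on_psi_real: "continuous_on D (psi_real x)"
proof -
  have "continuous_on D (\<lambda>u. phi x j u)" if "j < m" for j
  proof -
    have "continuous_on D (H j)"
      using H_cont[OF that] by (rule continuous_on_subset) (use that in \<open>auto simp: mem_domF_iff\<close>)
    thus ?thesis unfolding phi_def by (intro continuous_intros)
  qed
  thus ?thesis
    unfolding psi_real_def[abs_def] using m_pos by (intro continuous_on_Max) auto
qed

lemma prox_obj_min_iff:
  assumes "x \<in> D"
  shows "(\<forall>v. prox_obj m gradG H domH \<alpha> x u \<le> prox_obj m gradG H domH \<alpha> x v)
    \<longleftrightarrow> u \<in> D \<and> (\<forall>v\<in>D. prox_real x u \<le> prox_real x v)"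
proof
  assume min: "\<forall>v. prox_obj m gradG H domH \<alpha> x u \<le> prox_obj m gradG H domH \<alpha> x v"
  have "u \<in> D"
  proof (rule ccontr)
    assume "u \<notin> D"
    thus False using min[rule_format, of x] assms
      by (simp add: prox_obj_outside_domF prox_obj_eq_prox_real)
  qed
  moreover have "prox_real x u \<le> prox_real x v" if "v \<in> D" for v
    using min[rule_format, of v] \<open>u \<in> D\<close> that by (simp add: prox_obj_eq_prox_real)
  ultimately show "u \<in> D \<and> (\<forall>v\<in>D. prox_real x u \<le> prox_real x v)" by blast
next
  assume "u \<in> D \<and> (\<forall>v\<in>D. prox_real x u \<le> prox_real x v)"
  thus "\<forall>v. prox_obj m gradG H domH \<alpha> x u \<le> prox_obj m gradG H domH \<alpha> x v"
    by (metis prox_obj_eq_prox_real prox_obj_outside_domF ereal_less_eq(1,3))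
qed

lemma ex1_prox_obj_min:
  assumes "x \<in> D"
  shows "\<exists>!u. \<forall>v. prox_obj m gradG H domH \<alpha> x u \<le> prox_obj m gradG H domH \<alpha> x v"
  unfolding prox_obj_min_iff[OF assms] prox_real_def
  using prox_objective_attains_min[OF domF_closed convex_on_psi_real continuous_on_psi_real assms alpha_pos]
    prox_objective_min_unique[OF convex_on_psi_real alpha_pos]
  by metis

lemma prox_pt_min:
  assumes "x \<in> D"
  shows "prox_pt m gradG H domH \<alpha> x \<in> D"
    and "\<And>v. v \<in> D \<Longrightarrow> prox_real x (prox_pt m gradG H domH \<alpha> x) \<le> prox_real x v"
proof -
  have "\<forall>v. prox_obj m gradG H domH \<alpha> x (prox_pt m gradG H domH \<alpha> x) \<le> prox_obj m gradG H domH \<alpha> x v"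
    unfolding prox_pt_def by (rule theI'[OF ex1_prox_obj_min[OF assms]])
  thus "prox_pt m gradG H domH \<alpha> x \<in> D"
    and "\<And>v. v \<in> D \<Longrightarrow> prox_real x (prox_pt m gradG H domH \<alpha> x) \<le> prox_real x v"
    unfolding prox_obj_min_iff[OF assms] by auto
qed

lemma theta_eq_prox_real:
  "x \<in> D \<Longrightarrow> theta m gradG H domH \<alpha> x = ereal (prox_real x (prox_pt m gradG H domH \<alpha> x))"
  unfolding theta_def by (simp add: prox_obj_eq_prox_real prox_pt_min)

lemma not_weakly_pareto_if_psi_real_neg:
  assumes x: "x \<in> D" and p: "p \<in> D" and neg: "psi_real x p < 0"
  shows "\<not> weakly_pareto m G H domH x"
proof -
  define d where "d = p - x"
  define e where "e j = - phi x j p / 2" for j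
  have phi_neg: "phi x j p < 0" if "j < m" for j
    using phi_le_psi_real[OF that, of x p] neg by linarith
  have ev_G: "eventually (\<lambda>t. \<forall>j\<in>{..<m}.
      G j (x + t *\<^sub>R d) \<le> G j x + t * (gradG j x \<bullet> d) + t * e j) (at_right 0)"
    using G_grad phi_neg by (intro eventually_ball_finite ballI eventually_le_tangent_plus)
      (auto simp: e_def)
  have ev_t: "eventually (\<lambda>t. t \<in> {0<..<1}) (at_right (0::real))"
    by (rule eventually_at_right_real) simp
  from eventually_happens'[OF trivial_limit_at_right_real eventually_conj[OF ev_G ev_t]]
  obtain t where t: "0 < t" "t < 1"
    and G_le: "\<And>j. j < m \<Longrightarrow> G j (x + t *\<^sub>R d) \<le> G j x + t * (gradG j x \<bullet> d) + t * e j"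
    by auto
  define z where "z = x + t *\<^sub>R d"
  have z: "z \<in> D" unfolding z_def d_def using segment_in_domF x p t by simp
  have "Fext G H domH j z < Fext G H domH j x" if j: "j < m" for j
  proof -
    have "H j z \<le> H j x + t * (H j p - H j x)"
      using convex_onD[OF H_convex[OF j], of t x p] x p t j
      by (simp add: z_def d_def mem_domF_iff algebra_simps)
    moreover have "G j z \<le> G j x + t * (gradG j x \<bullet> d) + t * e j"
      using G_le[OF j] by (simp add: z_def)
    moreover have "t * phi x j p = t * (gradG j x \<bullet> d) + t * (H j p - H j x)"
      by (simp add: phi_def d_def algebra_simps)
    moreover have "t * e j = - (t * phi x j p) / 2" by (simp add: e_def)
    ultimately have "G j z + H j z \<le> G j x + H j x + t * phi x j p / 2"
      by linarith
    also have "\<dots> < G j x + H j x" using t phi_neg[OF j] by (simp add: mult_pos_neg)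
    finally show ?thesis using j x z by (simp add: Fext_eq)
  qed
  thus ?thesis unfolding weakly_pareto_def by blast
qed

lemma psi_real_neg_if_not_weakly_pareto:
  assumes x: "x \<in> D" and "\<not> weakly_pareto m G H domH x"
  obtains y where "y \<in> D" "psi_real x y < 0"
proof -
  obtain y where y: "\<And>j. j < m \<Longrightarrow> Fext G H domH j y < Fext G H domH j x"
    using assms(2) unfolding weakly_pareto_def by blast
  have "y \<in> domH j" if j: "j < m" for j
  proof (rule ccontr)
    assume "y \<notin> domH j"
    hence "Fext G H domH j y = \<infinity>" by (simp add: Fext_def)
    thus False using y[OF j] by simp
  qed
  hence "y \<in> D" by (simp add: mem_domF_iff)
  have "phi x j y < 0" if j: "j < m" for j
  proof -
    have "gradG j x \<bullet> (y - x) \<le> G j y - G j x"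
      using G_grad[OF j] G_convex[OF j] by (rule convex_on_imp_above_tangent_inner)
    moreover have "G j y + H j y < G j x + H j x"
      using y[OF j] j x \<open>y \<in> D\<close> by (simp add: Fext_eq)
    ultimately show ?thesis by (simp add: phi_def)
  qed
  hence "psi_real x y < 0"
    unfolding psi_real_def using m_pos by (subst Max_less_iff) auto
  thus ?thesis using that \<open>y \<in> D\<close> by blast
qed

lemma prox_real_neg_if_psi_real_neg:
  assumes x: "x \<in> D" and y: "y \<in> D" and neg: "psi_real x y < 0"
  obtains z where "z \<in> D" "prox_real x z < 0"
proof -
  have "0 \<le> (norm (y - x))\<^sup>2 / (2 * \<alpha>)" using alpha_pos by simp
  then obtain t where t: "0 < t" "t \<le> 1" "t * psi_real x y + t\<^sup>2 * ((norm (y - x))\<^sup>2 / (2 * \<alpha>)) < 0"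
    using small_step_linear_dominates_quadratic[OF neg] by blast
  define z where "z = (1 - t) *\<^sub>R x + t *\<^sub>R y"
  have "z \<in> D" unfolding z_def using convexD_alt[OF convex_domF x y] t by simp
  have "psi_real x z \<le> (1 - t) * psi_real x x + t * psi_real x y"
    unfolding z_def using t by (intro convex_onD[OF convex_on_psi_real] x y) auto
  hence "psi_real x z \<le> t * psi_real x y" by simp
  moreover have "z - x = t *\<^sub>R (y - x)" unfolding z_def by (simp add: algebra_simps)
  hence "norm (z - x) = t * norm (y - x)" using t by simp
  hence "(norm (z - x))\<^sup>2 / (2 * \<alpha>) = t\<^sup>2 * ((norm (y - x))\<^sup>2 / (2 * \<alpha>))"
    by (simp add: power_mult_distrib)
  ultimately have "prox_real x z < 0"
    using t(3) unfolding prox_real_def by linarith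
  thus ?thesis using that \<open>z \<in> D\<close> by blast
qed

lemma psi_real_le_prox_real: "psi_real x u \<le> prox_real x u"
  using alpha_pos by (simp add: prox_real_def)

lemma theta_eq_0_iff_weakly_pareto:
  assumes x: "x \<in> D"
  shows "theta m gradG H domH \<alpha> x = 0 \<longleftrightarrow> weakly_pareto m G H domH x"
proof -
  let ?p = "prox_pt m gradG H domH \<alpha> x"
  have le: "prox_real x ?p \<le> 0" using prox_pt_min(2)[OF x x] by simp
  have neg_iff: "prox_real x ?p < 0 \<longleftrightarrow> \<not> weakly_pareto m G H domH x"
  proof
    assume "prox_real x ?p < 0"
    hence "psi_real x ?p < 0" using psi_real_le_prox_real[of x ?p] by linarith
    thus "\<not> weakly_pareto m G H domH x"
      using not_weakly_pareto_if_psi_real_neg[OF x prox_pt_min(1)[OF x]] by blast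
  next
    assume "\<not> weakly_pareto m G H domH x"
    then obtain y where "y \<in> D" "psi_real x y < 0"
      by (rule psi_real_neg_if_not_weakly_pareto[OF x])
    then obtain z where "z \<in> D" "prox_real x z < 0"
      by (rule prox_real_neg_if_psi_real_neg[OF x])
    thus "prox_real x ?p < 0" using prox_pt_min(2)[OF x \<open>z \<in> D\<close>] by linarith
  qed
  have "prox_real x ?p = 0 \<longleftrightarrow> weakly_pareto m G H domH x"
    using le neg_iff by linarith
  thus ?thesis by (simp add: theta_eq_prox_real[OF x])
qed

lemma armijo_eventually:
  assumes "j < m" "d \<noteq> 0" "0 < \<gamma>"
  shows "eventually (armijo G gradG \<gamma> j x d) (at_right 0)"
  using eventually_le_tangent_plus[OF G_grad[OF assms(1)], of "\<gamma> / 2 * (norm d)\<^sup>2" x d] assms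
  by (auto simp: armijo_def mult.assoc elim!: eventually_mono)

lemma prox_pt_ne_if_theta_ne_0:
  "x \<in> D \<Longrightarrow> theta m gradG H domH \<alpha> x \<noteq> 0 \<Longrightarrow> prox_pt m gradG H domH \<alpha> x \<noteq> x"
  by (auto simp: theta_eq_prox_real)

lemma line_search_well_defined:
  assumes x: "x \<in> D" and theta: "theta m gradG H domH \<alpha> x \<noteq> 0" and \<gamma>: "0 < \<gamma>"
    and \<tau>: "0 < \<tau>1" "\<tau>1 < \<tau>2" "\<tau>2 < 1"
  shows "let d = prox_pt m gradG H domH \<alpha> x - x in
           \<forall>js. js < m \<and> (\<forall>i<m. gradG i x \<bullet> d \<le> gradG js x \<bullet> d) \<longrightarrow>
           (\<forall>ts. backtrack_seq \<tau>1 \<tau>2 1 ts \<longrightarrow>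
              (\<exists>i. armijo G gradG \<gamma> js x d (ts i)) \<and>
              (let t = ts (LEAST i. armijo G gradG \<gamma> js x d (ts i)) in
                 (\<forall>j<m. Fext G H domH j (x + t *\<^sub>R d) \<le> Fext G H domH j x) \<or>
                 (\<forall>ss. backtrack_seq \<tau>1 \<tau>2 t ss \<longrightarrow>
                    (\<exists>i>0. \<forall>j<m. armijo G gradG \<gamma> j x d (ss i)) \<and>
                    x + ss (LEAST i. 0 < i \<and> (\<forall>j<m. armijo G gradG \<gamma> j x d (ss i))) *\<^sub>R d
                      \<in> domF m domH)))"
proof -
  define p where "p = prox_pt m gradG H domH \<alpha> x"
  define d where "d = p - x"
  have "d \<noteq> 0" using prox_pt_ne_if_theta_ne_0[OF x theta] by (simp add: d_def p_def)
  hence ev: "eventually (\<lambda>t. \<forall>j\<in>{..<m}. armijo G gradG \<gamma> j x d t) (at_right 0)"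
    using armijo_eventually \<gamma> by (intro eventually_ball_finite) auto
  have hit: "\<exists>i>0. \<forall>j<m. armijo G gradG \<gamma> j x d (ss i)"
    if "backtrack_seq \<tau>1 \<tau>2 t0 ss" "0 < t0" for t0 ss
    using backtrack_seq_terminates[OF that(1) \<tau> that(2) ev] by auto
  have trial_in_domF: "x + ss i *\<^sub>R d \<in> D"
    if "backtrack_seq \<tau>1 \<tau>2 t0 ss" "0 < t0" "t0 \<le> 1" for t0 ss i
    using backtrack_seq_bounds[OF that(1) \<tau> that(2), of i] that(3)
    unfolding d_def p_def by (intro segment_in_domF x prox_pt_min(1)) auto
  show ?thesis
    unfolding Let_def p_def[symmetric] d_def[symmetric]
    \<comment> \<open>Step 3.3 terminates whether or not Step 3.2 accepts the step, so we prove the second disjunct.\<close>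
  proof (intro allI impI conjI disjI2)
    fix js ts assume js: "js < m \<and> (\<forall>i<m. gradG i x \<bullet> d \<le> gradG js x \<bullet> d)"
      and ts: "backtrack_seq \<tau>1 \<tau>2 1 ts"
    show "\<exists>i. armijo G gradG \<gamma> js x d (ts i)" using hit[OF ts] js by auto
    let ?t = "ts (LEAST i. armijo G gradG \<gamma> js x d (ts i))"
    have t: "0 < ?t" "?t \<le> 1" using backtrack_seq_bounds[OF ts \<tau>] by auto
    fix ss assume ss: "backtrack_seq \<tau>1 \<tau>2 ?t ss"
    show "\<exists>i>0. \<forall>j<m. armijo G gradG \<gamma> j x d (ss i)" by (rule hit[OF ss t(1)])
    show "x + ss (LEAST i. 0 < i \<and> (\<forall>j<m. armijo G gradG \<gamma> j x d (ss i))) *\<^sub>R d \<in> D"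
      by (rule trial_in_domF[OF ss t])
  qed
qed

end

theorem mainTheorem1:
  fixes m :: nat
    and G H :: "nat \<Rightarrow> 'a::euclidean_space \<Rightarrow> real"
    and gradG :: "nat \<Rightarrow> 'a \<Rightarrow> 'a"
    and domH :: "nat \<Rightarrow> 'a set"
    and \<alpha> \<gamma> \<tau>1 \<tau>2 :: real
  assumes m_pos: "0 < m"
    and G_grad: "\<forall>j<m. \<forall>x. (G j has_derivative (\<lambda>h. gradG j x \<bullet> h)) (at x)"
    and G_C1: "\<forall>j<m. continuous_on UNIV (gradG j)"
    and G_convex: "\<forall>j<m. convex_on UNIV (G j)"
    and H_proper: "\<forall>j<m. domH j \<noteq> {}"
    and H_convex: "\<forall>j<m. convex_on (domH j) (H j)"
    and H_cont: "\<forall>j<m. continuous_on (domH j) (H j)"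
    and domF_ne: "domF m domH \<noteq> {}"
    and domF_closed: "closed (domF m domH)"
    and alpha_pos: "0 < \<alpha>"
    and gamma: "0 < \<gamma>" "\<gamma> < 2 / \<alpha>"
    and tau: "0 < \<tau>1" "\<tau>1 < \<tau>2" "\<tau>2 < 1"
  shows
    "(\<forall>x\<in>domF m domH. \<exists>!u. \<forall>v. prox_obj m gradG H domH \<alpha> x u \<le> prox_obj m gradG H domH \<alpha> x v)
     \<and> (\<forall>x\<in>domF m domH. theta m gradG H domH \<alpha> x = 0 \<longleftrightarrow> weakly_pareto m G H domH x)
     \<and> (\<forall>x\<in>domF m domH. theta m gradG H domH \<alpha> x \<noteq> 0 \<longrightarrow>
          (let d = prox_pt m gradG H domH \<alpha> x - x in
           \<forall>js. js < m \<and> (\<forall>i<m. gradG i x \<bullet> d \<le> gradG js x \<bullet> d) \<longrightarrow>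
           (\<forall>ts. backtrack_seq \<tau>1 \<tau>2 1 ts \<longrightarrow>
              (\<exists>i. armijo G gradG \<gamma> js x d (ts i)) \<and>
              (let t = ts (LEAST i. armijo G gradG \<gamma> js x d (ts i)) in
                 (\<forall>j<m. Fext G H domH j (x + t *\<^sub>R d) \<le> Fext G H domH j x) \<or>
                 (\<forall>ss. backtrack_seq \<tau>1 \<tau>2 t ss \<longrightarrow>
                    (\<exists>i>0. \<forall>j<m. armijo G gradG \<gamma> j x d (ss i)) \<and>
                    x + ss (LEAST i. 0 < i \<and> (\<forall>j<m. armijo G gradG \<gamma> j x d (ss i))) *\<^sub>R d
                      \<in> domF m domH)))))"
proof -
  interpret mpg_problem m G H gradG domH \<alpha>
    using m_pos G_grad G_convex H_convex H_cont domF_closed alpha_pos by unfold_locales auto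
  show ?thesis
    by (intro conjI ballI impI ex1_prox_obj_min theta_eq_0_iff_weakly_pareto
        line_search_well_defined gamma(1) tau)
qed

end
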